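(* Let $(\mathcal{X},\|\cdot\|)$ be a real Banach space, $P$ a probability distribution on a measurable space $\mathcal{E}$, and $Q,P_e:\mathcal{X}\to\mathcal{X}$ with $\|Q(\theta_1)-Q(\theta_2)\|\le\rho\|\theta_1-\theta_2\|$ ($\rho\in[0,1)$, $\theta^\star$ the unique fixed point of $Q$), $\|P_e(\theta_1)-P_e(\theta_2)\|\le L\|\theta_1-\theta_2\|$ for all $e$ ($L\ge0$), and $\mathbb{E}_{e\sim P}[\|P_e(\theta^\star)-\theta^\star\|]\le\sigma$ for some $\sigma\ge0$. Assume $\gamma:=\rho L>0$. Then for every $\theta\in\mathcal{X}$, \[\|\theta-\theta^\star\|\ge\frac{1}{2\rho L}\Big(\mathbb{E}_e[\Omega(\theta;e)]-(1+\rho)\sigma\Big)_+.\] If moreover $\pi:\mathcal{X}\to\mathcal{Z}$ and $\ell:\mathcal{Z}\to\mathbb{R}$ satisfy $\ell(\pi(\theta))-\ell(\pi(\theta^\star))\ge\frac{m_{\mathrm{QG}}}{2}\|\theta-\theta^\star\|^2$ for all $\theta$ with some $m_{\mathrm{QG}}>0$, then for every $\theta\in\mathcal{X}$, \[\ell(\pi(\theta))-\ell(\pi(\theta^\star))\ge\frac{m_{\mathrm{QG}}}{8\rho^2L^2}\Big(\mathbb{E}_e[\Omega(\theta;e)]-(1+\rho)\sigma\Big)_+^2.\]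
   Context: The order-gap is $\Omega(\theta;e):=\|Q(P_e(\theta))-P_e(Q(\theta))\|$, expectation over $e\sim P$; $(x)_+=\max(x,0)$. $\pi$ is a decision map into a set $\mathcal{Z}$ and $\ell$ a loss. *)

theory Defs
  imports "HOL-Probability.Probability"
begin

definition order_gap :: "('x::real_normed_vector \<Rightarrow> 'x) \<Rightarrow> ('e \<Rightarrow> 'x \<Rightarrow> 'x) \<Rightarrow> 'x \<Rightarrow> 'e \<Rightarrow> real" where
  "order_gap Q P \<theta> e = norm (Q (P e \<theta>) - P e (Q \<theta>))"

definition pos_part :: "real \<Rightarrow> real" where
  "pos_part x = max x 0"

end

theory Submission
  imports Defs
begin

text \<open>Since \<open>\<theta>s\<close> is fixed by \<open>Q\<close>, the order gap at \<open>\<theta>s\<close> is controlled by the noise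
  \<open>norm (P e \<theta>s - \<theta>s)\<close> alone, and moving from \<open>\<theta>s\<close> to \<open>\<theta>\<close> changes each of the two
  compositions \<open>Q \<circ> P e\<close> and \<open>P e \<circ> Q\<close> by at most \<open>\<rho> L norm (\<theta> - \<theta>s)\<close>. Taking
  expectations gives \<open>E \<Omega>(\<theta>) \<le> 2 \<rho> L norm (\<theta> - \<theta>s) + (1 + \<rho>) \<sigma>\<close>, which is the distance
  bound; the loss bound follows by quadratic growth.\<close>

lemma norm_commutator_le_fixed_point_dist:
  fixes Q F :: "'x::real_normed_vector \<Rightarrow> 'x"
  assumes "0 \<le> \<rho>" "0 \<le> L"
    and Q_lip: "\<And>t1 t2. norm (Q t1 - Q t2) \<le> \<rho> * norm (t1 - t2)"
    and F_lip: "\<And>t1 t2. norm (F t1 - F t2) \<le> L * norm (t1 - t2)"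
    and Q_fix: "Q \<theta>s = \<theta>s"
  shows "norm (Q (F \<theta>) - F (Q \<theta>))
           \<le> 2 * \<rho> * L * norm (\<theta> - \<theta>s) + (1 + \<rho>) * norm (F \<theta>s - \<theta>s)"
proof -
  let ?d = "norm (\<theta> - \<theta>s)"
  have QF: "norm (Q (F \<theta>) - Q (F \<theta>s)) \<le> \<rho> * (L * ?d)"
    using Q_lip[of "F \<theta>" "F \<theta>s"] F_lip[of \<theta> \<theta>s] \<open>0 \<le> \<rho>\<close>
    by (meson mult_left_mono order_trans)
  have noise: "norm (Q (F \<theta>s) - Q \<theta>s) \<le> \<rho> * norm (F \<theta>s - \<theta>s)"
    using Q_lip by simp
  have "norm (\<theta>s - Q \<theta>) \<le> \<rho> * ?d"
    using Q_lip[of \<theta>s \<theta>] Q_fix by (simp add: norm_minus_commute)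
  then have FQ: "norm (F \<theta>s - F (Q \<theta>)) \<le> L * (\<rho> * ?d)"
    using F_lip[of \<theta>s "Q \<theta>"] \<open>0 \<le> L\<close> by (meson mult_left_mono order_trans)
  have "Q (F \<theta>) - F (Q \<theta>) = (Q (F \<theta>) - Q (F \<theta>s)) + (Q (F \<theta>s) - Q \<theta>s)
      + (\<theta>s - F \<theta>s) + (F \<theta>s - F (Q \<theta>))"
    using Q_fix by simp
  then have "norm (Q (F \<theta>) - F (Q \<theta>)) \<le> norm (Q (F \<theta>) - Q (F \<theta>s)) + norm (Q (F \<theta>s) - Q \<theta>s)
      + norm (F \<theta>s - \<theta>s) + norm (F \<theta>s - F (Q \<theta>))"
    by (metis norm_minus_commute norm_triangle_le add_mono order_refl)
  with QF noise FQ show ?thesis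
    by (simp add: algebra_simps)
qed

lemma (in prob_space) expected_order_gap_le:
  assumes "0 \<le> \<rho>" "0 \<le> L"
    and Q_lip: "\<And>t1 t2. norm (Q t1 - Q t2) \<le> \<rho> * norm (t1 - t2)"
    and P_lip: "\<And>e t1 t2. e \<in> space M \<Longrightarrow> norm (P e t1 - P e t2) \<le> L * norm (t1 - t2)"
    and Q_fix: "Q \<theta>s = \<theta>s"
    and int_noise: "integrable M (\<lambda>e. norm (P e \<theta>s - \<theta>s))"
    and noise: "(\<integral>e. norm (P e \<theta>s - \<theta>s) \<partial>M) \<le> \<sigma>"
    and int_gap: "integrable M (order_gap Q P \<theta>)"
  shows "(\<integral>e. order_gap Q P \<theta> e \<partial>M) \<le> 2 * \<rho> * L * norm (\<theta> - \<theta>s) + (1 + \<rho>) * \<sigma>"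
proof -
  let ?bound = "\<lambda>e. 2 * \<rho> * L * norm (\<theta> - \<theta>s) + (1 + \<rho>) * norm (P e \<theta>s - \<theta>s)"
  have "(\<integral>e. order_gap Q P \<theta> e \<partial>M) \<le> (\<integral>e. ?bound e \<partial>M)"
  proof (rule integral_mono[OF int_gap])
    show "integrable M ?bound"
      using int_noise by simp
    show "order_gap Q P \<theta> e \<le> ?bound e" if "e \<in> space M" for e
      unfolding order_gap_def
      using norm_commutator_le_fixed_point_dist[OF assms(1,2) Q_lip P_lip[OF that] Q_fix] .
  qed
  also have "\<dots> = 2 * \<rho> * L * norm (\<theta> - \<theta>s) + (1 + \<rho>) * (\<integral>e. norm (P e \<theta>s - \<theta>s) \<partial>M)"
    using int_noise by (simp add: prob_space)
  also have "\<dots> \<le> 2 * \<rho> * L * norm (\<theta> - \<theta>s) + (1 + \<rho>) * \<sigma>"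
    using noise \<open>0 \<le> \<rho>\<close> by (simp add: mult_left_mono)
  finally show ?thesis .
qed

lemma pos_part_diff_le:
  assumes "a \<le> c + b" "0 \<le> c"
  shows "pos_part (a - b) \<le> c"
  using assms unfolding pos_part_def by simp

lemma pos_part_nonneg: "0 \<le> pos_part x"
  unfolding pos_part_def by simp

lemma quadratic_growth_lower_bound:
  fixes m \<gamma> p d :: real
  assumes "0 \<le> m" "0 < \<gamma>" "0 \<le> p" "p \<le> 2 * \<gamma> * d"
  shows "m / (8 * \<gamma>\<^sup>2) * p\<^sup>2 \<le> m / 2 * d\<^sup>2"
proof -
  have "p\<^sup>2 \<le> (2 * \<gamma> * d)\<^sup>2"
    using assms(3,4) by (intro power_mono)
  then have "m / (8 * \<gamma>\<^sup>2) * p\<^sup>2 \<le> m / (8 * \<gamma>\<^sup>2) * (2 * \<gamma> * d)\<^sup>2"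
    using \<open>0 \<le> m\<close> by (intro mult_left_mono) auto
  also have "\<dots> = m / 2 * d\<^sup>2"
    using \<open>0 < \<gamma>\<close> by (simp add: field_simps power2_eq_square)
  finally show ?thesis .
qed

theorem proposition4p14:
  fixes M :: "'e measure" and Q :: "'x::banach \<Rightarrow> 'x" and P :: "'e \<Rightarrow> 'x \<Rightarrow> 'x"
    and \<theta>s :: 'x and \<rho> L \<sigma> :: real
  assumes prob: "prob_space M"
    and rho: "0 \<le> \<rho>" "\<rho> < 1"
    and Q_contr: "\<And>t1 t2. norm (Q t1 - Q t2) \<le> \<rho> * norm (t1 - t2)"
    and Q_fix: "Q \<theta>s = \<theta>s" and fix_unique: "\<And>t. Q t = t \<Longrightarrow> t = \<theta>s"
    and L: "0 \<le> L"
    and P_lip: "\<And>e t1 t2. e \<in> space M \<Longrightarrow> norm (P e t1 - P e t2) \<le> L * norm (t1 - t2)"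
    and int_noise: "integrable M (\<lambda>e. norm (P e \<theta>s - \<theta>s))"
    and noise: "(\<integral>e. norm (P e \<theta>s - \<theta>s) \<partial>M) \<le> \<sigma>" and sigma: "0 \<le> \<sigma>"
    and int_gap: "\<And>\<theta>. integrable M (order_gap Q P \<theta>)"
    and gamma: "\<rho> * L > 0"
  shows "(\<forall>\<theta>. norm (\<theta> - \<theta>s) \<ge>
           1 / (2 * \<rho> * L) * pos_part ((\<integral>e. order_gap Q P \<theta> e \<partial>M) - (1 + \<rho>) * \<sigma>))
    \<and> (\<forall>(\<pi> :: 'x \<Rightarrow> 'z) (loss :: 'z \<Rightarrow> real) mQG.
           mQG > 0 \<longrightarrow>
           (\<forall>t. loss (\<pi> t) - loss (\<pi> \<theta>s) \<ge> mQG / 2 * (norm (t - \<theta>s))\<^sup>2) \<longrightarrow>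
          (\<forall>\<theta>.
           loss (\<pi> \<theta>) - loss (\<pi> \<theta>s) \<ge>
             mQG / (8 * \<rho>\<^sup>2 * L\<^sup>2) * (pos_part ((\<integral>e. order_gap Q P \<theta> e \<partial>M) - (1 + \<rho>) * \<sigma>))\<^sup>2))"
proof -
  let ?p = "\<lambda>\<theta>. pos_part ((\<integral>e. order_gap Q P \<theta> e \<partial>M) - (1 + \<rho>) * \<sigma>)"
  have gap_bound: "?p \<theta> \<le> 2 * (\<rho> * L) * norm (\<theta> - \<theta>s)" for \<theta>
    using prob_space.expected_order_gap_le[OF prob rho(1) L Q_contr P_lip Q_fix int_noise noise int_gap]
      gamma rho(1) L by (intro pos_part_diff_le) (simp_all add: mult.assoc)
  show ?thesis
  proof (intro conjI allI impI)
    fix \<theta>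
    show "1 / (2 * \<rho> * L) * ?p \<theta> \<le> norm (\<theta> - \<theta>s)"
      using gap_bound[of \<theta>] gamma by (simp add: field_simps)
  next
    fix \<pi> :: "'x \<Rightarrow> 'z" and loss :: "'z \<Rightarrow> real" and mQG :: real and \<theta>
    assume "mQG > 0" and qg: "\<forall>t. mQG / 2 * (norm (t - \<theta>s))\<^sup>2 \<le> loss (\<pi> t) - loss (\<pi> \<theta>s)"
    have "mQG / (8 * \<rho>\<^sup>2 * L\<^sup>2) * (?p \<theta>)\<^sup>2 = mQG / (8 * (\<rho> * L)\<^sup>2) * (?p \<theta>)\<^sup>2"
      by (simp add: power_mult_distrib mult.assoc)
    also have "\<dots> \<le> mQG / 2 * (norm (\<theta> - \<theta>s))\<^sup>2"
      using \<open>mQG > 0\<close> gamma pos_part_nonneg gap_bound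
      by (intro quadratic_growth_lower_bound) auto
    also have "\<dots> \<le> loss (\<pi> \<theta>) - loss (\<pi> \<theta>s)"
      using qg by blast
    finally show "mQG / (8 * \<rho>\<^sup>2 * L\<^sup>2) * (?p \<theta>)\<^sup>2 \<le> loss (\<pi> \<theta>) - loss (\<pi> \<theta>s)" .
  qed
qed

end
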